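(* With the convention $g_1(0)=h_1(0)=0$, $$\sum_{M\geq1}(g_1(M)-g_1(M-1))x^M=\frac{x^2-x^3}{(1-x-x^2)^2}=\sum_{M\geq1}(h_1(M)-h_1(M-1))x^M,$$ and $$\sum_{M\geq1}(g(M)-h(M))x^M=\frac{x^2-x^3}{(1-x-x^2)^2}.$$
   Context: The perimeter of a nonempty partition $\lambda$ with largest part $\lambda_1$ and $\ell(\lambda)$ parts is $\lambda_1+\ell(\lambda)-1$. $\mathcal G(M)$ is the set of partitions into odd parts with perimeter $M$, $\mathcal H(M)$ the set of partitions into distinct parts with perimeter $M$; $g(M)$ (resp. $h(M)$) is the total number of parts, summed over all partitions in $\mathcal G(M)$ (resp. $\mathcal H(M)$). $\mathcal G_1(M)$ is the set of partitions with perimeter $M$ in which exactly one distinct even integer occurs as a part (possibly with multiplicity greater than one) and all other parts are odd; $\mathcal H_1(M)$ is the set of partitions with perimeter $M$ in which exactly one part value occurs at least twice and every other part value occurs exactly once. $g_1(M)=|\mathcal G_1(M)|$, $h_1(M)=|\mathcal H_1(M)|$. *)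

theory Defs
  imports "HOL-Library.Multiset" "HOL-Computational_Algebra.Formal_Power_Series"
begin

definition is_partition :: "nat multiset \<Rightarrow> bool" where
  "is_partition p \<longleftrightarrow> p \<noteq> {#} \<and> (\<forall>x\<in>#p. 0 < x)"

definition perimeter :: "nat multiset \<Rightarrow> nat" where
  "perimeter p = Max (set_mset p) + size p - 1"

definition partitions_per :: "nat \<Rightarrow> nat multiset set" where
  "partitions_per M = {p. is_partition p \<and> perimeter p = M}"

definition calG :: "nat \<Rightarrow> nat multiset set" where
  "calG M = {p \<in> partitions_per M. \<forall>x\<in>#p. odd x}"

definition calH :: "nat \<Rightarrow> nat multiset set" where
  "calH M = {p \<in> partitions_per M. \<forall>x. count p x \<le> 1}"

definition calG1 :: "nat \<Rightarrow> nat multiset set" where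
  "calG1 M = {p \<in> partitions_per M. card {x \<in> set_mset p. even x} = 1}"

definition calH1 :: "nat \<Rightarrow> nat multiset set" where
  "calH1 M = {p \<in> partitions_per M. card {x. 2 \<le> count p x} = 1}"

definition g :: "nat \<Rightarrow> nat" where "g M = (\<Sum>p\<in>calG M. size p)"
definition h :: "nat \<Rightarrow> nat" where "h M = (\<Sum>p\<in>calH M. size p)"

definition g1 :: "nat \<Rightarrow> nat" where "g1 M = (if M = 0 then 0 else card (calG1 M))"
definition h1 :: "nat \<Rightarrow> nat" where "h1 M = (if M = 0 then 0 else card (calH1 M))"

end

theory Submission
  imports Defs
begin

text \<open>
  All six counting sequences satisfy Fibonacci-type recurrences, obtained by sorting the partitions of
  perimeter \<open>M + 2\<close> according to the multiplicity of the largest part \<open>\<lambda>\<^sub>1\<close> and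
  whether \<open>\<lambda>\<^sub>1 - 1\<close> is a part.  Each block is in bijection with partitions of smaller perimeter
  via one of three operations: repeating \<open>\<lambda>\<^sub>1\<close> (perimeter \<open>+1\<close>), raising \<open>\<lambda>\<^sub>1\<close> by
  \<open>k\<close> (perimeter \<open>+k\<close>), or adjoining a new largest part \<open>\<lambda>\<^sub>1 + 1\<close> (perimeter \<open>+2\<close>).
  This yields \<open>|\<G>(M+2)| = |\<G>(M+1)| + |\<G>(M)|\<close>, the same for \<open>\<H>\<close>, and
  \<open>g(M+2) = g(M+1) + g(M) + |\<G>(M+1)|\<close>, \<open>h(M+2) = h(M+1) + h(M) + |\<H>(M)|\<close>,
  \<open>g\<^sub>1(M+2) = g\<^sub>1(M+1) + g\<^sub>1(M) + |\<G>(M+1)|\<close>, \<open>h\<^sub>1(M+2) = h\<^sub>1(M+1) + h\<^sub>1(M) + |\<H>(M+1)|\<close>.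
  Multiplying the generating functions by \<open>1 - x - x\<^sup>2\<close> turns these into linear equations
  whose solutions give the stated closed forms.
\<close>

lemma bij_betw_restrict:
  assumes "bij_betw f A B" "A' \<subseteq> A" "B' \<subseteq> B" "\<And>a. a \<in> A \<Longrightarrow> f a \<in> B' \<longleftrightarrow> a \<in> A'"
  shows "bij_betw f A' B'"
proof (rule bij_betw_subset[OF assms(1,2)])
  show "f ` A' = B'"
  proof
    show "f ` A' \<subseteq> B'" using assms(2,4) by blast
    show "B' \<subseteq> f ` A'"
    proof
      fix b assume "b \<in> B'"
      then obtain a where "a \<in> A" "b = f a"
        using assms(1,3) by (metis bij_betw_imp_surj_on imageE subsetD)
      then show "b \<in> f ` A'" using assms(4) \<open>b \<in> B'\<close> by blast
    qed
  qed
qed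

lemma card_le_1_eq:
  assumes "finite A" "card A \<le> 1" "a \<in> A" "b \<in> A"
  shows "a = b"
  using card_le_Suc0_iff_eq[OF assms(1)] assms(2-4) by simp

lemma sum_filter_split:
  assumes "finite X"
  shows "sum f X = sum f {x \<in> X. P x} + sum f {x \<in> X. \<not> P x}"
proof -
  have "sum f X = sum f ({x \<in> X. P x} \<union> {x \<in> X. \<not> P x})"
    by (rule arg_cong[where f = "sum f"]) blast
  also have "\<dots> = sum f {x \<in> X. P x} + sum f {x \<in> X. \<not> P x}"
    by (rule sum.union_disjoint) (use assms in auto)
  finally show ?thesis .
qed

lemma card_filter_split:
  "finite X \<Longrightarrow> card X = card {x \<in> X. P x} + card {x \<in> X. \<not> P x}"
  using sum_filter_split[of X "\<lambda>_. 1::nat"] by simp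

lemma card_filter_conj_split:
  assumes "finite X"
  shows "card {x \<in> X. Q x} = card {x \<in> X. Q x \<and> P x} + card {x \<in> X. Q x \<and> \<not> P x}"
proof -
  have "card {x \<in> X. Q x} = card ({x \<in> X. Q x \<and> P x} \<union> {x \<in> X. Q x \<and> \<not> P x})"
    by (rule arg_cong[where f = card]) blast
  also have "\<dots> = card {x \<in> X. Q x \<and> P x} + card {x \<in> X. Q x \<and> \<not> P x}"
    by (rule card_Un_disjoint) (use assms in auto)
  finally show ?thesis .
qed

lemma even_parts_insert_odd: "odd a \<Longrightarrow> {x \<in> insert a A. even x} = {x \<in> A. even x}"
  by auto

section \<open>Partitions of a given perimeter\<close>

definition max_part :: "nat multiset \<Rightarrow> nat" where
  "max_part p = Max (set_mset p)"

definition drop_max :: "nat multiset \<Rightarrow> nat multiset" where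
  "drop_max p = p - {#max_part p#}"

lemma max_part_in: "p \<noteq> {#} \<Longrightarrow> max_part p \<in># p"
  unfolding max_part_def by simp

lemma le_max_part: "x \<in># p \<Longrightarrow> x \<le> max_part p"
  unfolding max_part_def by simp

lemma max_part_eqI: "a \<in># p \<Longrightarrow> (\<And>x. x \<in># p \<Longrightarrow> x \<le> a) \<Longrightarrow> max_part p = a"
  unfolding max_part_def by (intro Max_eqI) auto

lemma max_part_singleton: "max_part {#a#} = a"
  by (rule max_part_eqI) auto

lemma count_max_part_pos: "p \<noteq> {#} \<Longrightarrow> 0 < count p (max_part p)"
  using max_part_in by simp

lemma count_drop_max: "count (drop_max p) x = count p x - (if x = max_part p then 1 else 0)"
  by (simp add: drop_max_def)

lemma in_drop_max: "x \<in># drop_max p \<Longrightarrow> x \<in># p"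
  unfolding drop_max_def by (rule in_diffD)

lemma add_mset_max_drop_max: "p \<noteq> {#} \<Longrightarrow> add_mset (max_part p) (drop_max p) = p"
  by (simp add: drop_max_def max_part_in)

lemma size_drop_max: "p \<noteq> {#} \<Longrightarrow> size (drop_max p) = size p - 1"
  by (simp add: drop_max_def max_part_in size_Diff_singleton)

lemma drop_max_less_max_part:
  assumes "count p (max_part p) = 1" "x \<in># drop_max p"
  shows "x < max_part p"
proof -
  have "count (drop_max p) (max_part p) = 0"
    using assms(1) by (simp add: count_drop_max)
  then have "x \<noteq> max_part p"
    using assms(2) by (metis not_in_iff)
  then show ?thesis
    using le_max_part[OF in_drop_max[OF assms(2)]] by simp
qed

lemma set_mset_eq_insert_drop_max:
  "p \<noteq> {#} \<Longrightarrow> set_mset p = insert (max_part p) (set_mset (drop_max p))"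
  by (metis add_mset_max_drop_max set_mset_add_mset_insert)

lemma count_Suc_max_part: "count q (Suc (max_part q)) = 0"
  using le_max_part[of "Suc (max_part q)" q] by (auto simp: not_in_iff[symmetric])

lemma partitions_per_iff:
  "p \<in> partitions_per m \<longleftrightarrow> p \<noteq> {#} \<and> (\<forall>x\<in>#p. 0 < x) \<and> max_part p + size p = Suc m"
  using nonempty_has_size[of p]
  by (auto simp: partitions_per_def is_partition_def perimeter_def max_part_def Suc_le_eq)

lemma partitions_perD:
  assumes "p \<in> partitions_per m"
  shows "p \<noteq> {#}" "0 < max_part p" "0 < size p" "max_part p \<le> m" "size p \<le> m"
proof -
  show ne: "p \<noteq> {#}" and "0 < size p" using assms nonempty_has_size by (auto simp: partitions_per_iff)
  show "0 < max_part p" using assms max_part_in[OF ne] by (auto simp: partitions_per_iff)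
  with \<open>0 < size p\<close> show "max_part p \<le> m" "size p \<le> m" using assms by (auto simp: partitions_per_iff)
qed

lemma partitions_per_max_part_1:
  assumes "p \<in> partitions_per m" "max_part p = 1"
  shows "count p 1 = m"
proof -
  have "set_mset p \<subseteq> {1}"
    using assms le_max_part[of _ p] by (fastforce simp: partitions_per_iff)
  then have "p = replicate_mset (size p) 1" by (rule set_mset_subset_singletonD)
  then show ?thesis
    using assms by (metis count_replicate_mset partitions_per_iff Suc_inject plus_1_eq_Suc)
qed

lemma partitions_per_0: "partitions_per 0 = {}"
  using partitions_perD by fastforce

lemma partitions_per_1: "partitions_per 1 = {{#1#}}"
proof -
  have "p = {#1#}" if "p \<in> partitions_per 1" for p
  proof -
    have "size p = 1" "max_part p = 1"
      using partitions_perD[OF that] by simp_all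
    then show ?thesis by (metis size_1_singleton_mset max_part_singleton)
  qed
  then show ?thesis by (auto simp: partitions_per_iff max_part_singleton)
qed

lemma finite_partitions_per: "finite (partitions_per m)"
proof (rule finite_subset)
  show "partitions_per m \<subseteq> mset ` {xs. set xs \<subseteq> {0..m} \<and> length xs \<le> m}"
  proof
    fix p assume p: "p \<in> partitions_per m"
    obtain xs where xs: "p = mset xs" by (metis ex_mset)
    have "set xs \<subseteq> {0..m}"
      using le_max_part[of _ p] partitions_perD(4)[OF p] xs by fastforce
    moreover have "length xs \<le> m" using partitions_perD(5)[OF p] xs by simp
    ultimately show "p \<in> mset ` {xs. set xs \<subseteq> {0..m} \<and> length xs \<le> m}" using xs by blast
  qed
  show "finite (mset ` {xs. set xs \<subseteq> {0..m} \<and> length xs \<le> m})"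
    by (rule finite_imageI, rule finite_lists_length_le) simp
qed

lemma count_max_part_ge_2_iff:
  assumes "p \<in> partitions_per m"
  shows "2 \<le> count p (max_part p) \<longleftrightarrow> count p (max_part p) \<noteq> 1"
  using count_max_part_pos[OF partitions_perD(1)[OF assms]] by presburger

lemma Collect_not_count_max_part_ge_2:
  assumes "X \<subseteq> partitions_per m"
  shows "{p \<in> X. \<not> 2 \<le> count p (max_part p)} = {p \<in> X. count p (max_part p) = 1}"
  by (rule Collect_cong) (use assms count_max_part_ge_2_iff in blast)

section \<open>Three bijections acting on the largest part\<close>

definition dup_max :: "nat multiset \<Rightarrow> nat multiset" where
  "dup_max p = add_mset (max_part p) p"

lemma max_part_dup_max: "q \<noteq> {#} \<Longrightarrow> max_part (dup_max q) = max_part q"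
  unfolding dup_max_def by (rule max_part_eqI) (auto intro: max_part_in le_max_part)

lemma drop_max_dup_max: "q \<noteq> {#} \<Longrightarrow> drop_max (dup_max q) = q"
  by (simp add: drop_max_def max_part_dup_max) (simp add: dup_max_def)

lemma count_dup_max: "count (dup_max q) x = count q x + (if x = max_part q then 1 else 0)"
  by (simp add: dup_max_def)

lemma set_mset_dup_max: "q \<noteq> {#} \<Longrightarrow> set_mset (dup_max q) = set_mset q"
  by (auto simp: dup_max_def intro: max_part_in)

lemma dup_max_not_empty: "dup_max q \<noteq> {#}"
  by (simp add: dup_max_def)

lemma size_dup_max: "size (dup_max q) = Suc (size q)"
  by (simp add: dup_max_def)

lemma max_part_drop_max:
  assumes "2 \<le> count p (max_part p)"
  shows "max_part (drop_max p) = max_part p"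
proof (rule max_part_eqI)
  show "max_part p \<in># drop_max p" using assms by (simp add: count_drop_max flip: count_greater_zero_iff)
qed (auto intro: le_max_part in_drop_max)

lemma dup_max_drop_max:
  assumes "2 \<le> count p (max_part p)"
  shows "dup_max (drop_max p) = p"
proof -
  have "p \<noteq> {#}" using assms by auto
  then show ?thesis
    using assms by (simp add: dup_max_def max_part_drop_max add_mset_max_drop_max)
qed

lemma bij_betw_dup_max:
  "bij_betw dup_max (partitions_per m) {p \<in> partitions_per (Suc m). 2 \<le> count p (max_part p)}"
proof (rule bij_betw_byWitness[where f' = drop_max])
  show "\<forall>q\<in>partitions_per m. drop_max (dup_max q) = q"
    by (auto simp: partitions_per_iff drop_max_dup_max)
  show "\<forall>p\<in>{p \<in> partitions_per (Suc m). 2 \<le> count p (max_part p)}. dup_max (drop_max p) = p"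
    by (auto simp: dup_max_drop_max)
  show "dup_max ` partitions_per m \<subseteq> {p \<in> partitions_per (Suc m). 2 \<le> count p (max_part p)}"
  proof safe
    fix q assume q: "q \<in> partitions_per m"
    then have ne: "q \<noteq> {#}" by (rule partitions_perD)
    have "0 < count q (max_part q)" using count_max_part_pos[OF ne] .
    then show "dup_max q \<in> partitions_per (Suc m)" "2 \<le> count (dup_max q) (max_part (dup_max q))"
      using q by (simp_all add: partitions_per_iff max_part_dup_max[OF ne] set_mset_dup_max[OF ne]
          size_dup_max count_dup_max dup_max_not_empty)
  qed
  show "drop_max ` {p \<in> partitions_per (Suc m). 2 \<le> count p (max_part p)} \<subseteq> partitions_per m"
  proof safe
    fix p assume p: "p \<in> partitions_per (Suc m)" "2 \<le> count p (max_part p)"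
    have "max_part p \<in># drop_max p"
      using p(2) by (simp add: count_drop_max flip: count_greater_zero_iff)
    then have "drop_max p \<noteq> {#}" by auto
    then show "drop_max p \<in> partitions_per m"
      using p partitions_perD[OF p(1)]
      by (auto simp: partitions_per_iff max_part_drop_max size_drop_max dest: in_drop_max)
  qed
qed

definition raise_max :: "nat \<Rightarrow> nat multiset \<Rightarrow> nat multiset" where
  "raise_max k p = add_mset (max_part p + k) (drop_max p)"

definition lower_max :: "nat \<Rightarrow> nat multiset \<Rightarrow> nat multiset" where
  "lower_max k p = add_mset (max_part p - k) (drop_max p)"

lemma max_part_raise_max: "q \<noteq> {#} \<Longrightarrow> max_part (raise_max k q) = max_part q + k"
  unfolding raise_max_def
  by (rule max_part_eqI) (auto dest: in_drop_max le_max_part intro: add_increasing2)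

lemma drop_max_raise_max: "q \<noteq> {#} \<Longrightarrow> drop_max (raise_max k q) = drop_max q"
  by (simp add: drop_max_def max_part_raise_max) (simp add: raise_max_def drop_max_def)

lemma size_raise_max: "q \<noteq> {#} \<Longrightarrow> size (raise_max k q) = size q"
  using nonempty_has_size[of q] by (simp add: raise_max_def size_drop_max)

lemma set_mset_raise_max:
  "set_mset (raise_max k q) = insert (max_part q + k) (set_mset (drop_max q))"
  by (simp add: raise_max_def)

lemma count_raise_max:
  "count (raise_max k q) x = (if x = max_part q + k then 1 else 0) + (count q x - (if x = max_part q then 1 else 0))"
  by (simp add: raise_max_def count_drop_max)

lemma raise_max_not_empty: "raise_max k q \<noteq> {#}"
  by (simp add: raise_max_def)

lemma count_max_raise_max:
  assumes "q \<noteq> {#}" "0 < k"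
  shows "count (raise_max k q) (max_part (raise_max k q)) = 1"
proof -
  have "count q (max_part q + k) = 0"
    using le_max_part[of "max_part q + k" q] assms(2) by (auto simp: not_in_iff[symmetric])
  then show ?thesis using assms(2) by (simp add: max_part_raise_max[OF assms(1)] count_raise_max)
qed

lemma raise_max_lower_max:
  assumes "p \<noteq> {#}" "k \<le> max_part p" "\<forall>x\<in>#drop_max p. x + k \<le> max_part p"
  shows "max_part (lower_max k p) = max_part p - k" "drop_max (lower_max k p) = drop_max p"
    "raise_max k (lower_max k p) = p"
proof -
  show max: "max_part (lower_max k p) = max_part p - k"
    unfolding lower_max_def using assms(3) by (intro max_part_eqI) auto
  show drop: "drop_max (lower_max k p) = drop_max p"
    by (simp add: drop_max_def max) (simp add: lower_max_def drop_max_def)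
  show "raise_max k (lower_max k p) = p"
    using assms(1,2) by (simp add: raise_max_def max drop add_mset_max_drop_max)
qed

lemma bij_betw_raise_max:
  assumes "0 < k"
  shows "bij_betw (raise_max k) (partitions_per m)
    {p \<in> partitions_per (m + k). k < max_part p \<and> (\<forall>x\<in>#drop_max p. x + k \<le> max_part p)}"
proof (rule bij_betw_byWitness[where f' = "lower_max k"])
  show "\<forall>q\<in>partitions_per m. lower_max k (raise_max k q) = q"
    by (auto simp: lower_max_def max_part_raise_max drop_max_raise_max partitions_per_iff
        add_mset_max_drop_max)
  show "\<forall>p\<in>{p \<in> partitions_per (m + k). k < max_part p \<and> (\<forall>x\<in>#drop_max p. x + k \<le> max_part p)}.
      raise_max k (lower_max k p) = p"
    by (auto simp: partitions_per_iff raise_max_lower_max)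
  show "raise_max k ` partitions_per m
    \<subseteq> {p \<in> partitions_per (m + k). k < max_part p \<and> (\<forall>x\<in>#drop_max p. x + k \<le> max_part p)}"
  proof safe
    fix q assume q: "q \<in> partitions_per m"
    note facts = partitions_perD[OF q]
    show "raise_max k q \<in> partitions_per (m + k)"
      using q facts(2) by (auto simp: partitions_per_iff max_part_raise_max size_raise_max
          raise_max_not_empty set_mset_raise_max dest: in_drop_max)
    show "k < max_part (raise_max k q)" using facts(1,2) by (simp add: max_part_raise_max)
    show "x + k \<le> max_part (raise_max k q)" if "x \<in># drop_max (raise_max k q)" for x
      using that facts(1) by (simp add: max_part_raise_max drop_max_raise_max le_max_part in_drop_max)
  qed
  show "lower_max k ` {p \<in> partitions_per (m + k). k < max_part p \<and> (\<forall>x\<in>#drop_max p. x + k \<le> max_part p)}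
    \<subseteq> partitions_per m"
  proof safe
    fix p assume p: "p \<in> partitions_per (m + k)" "k < max_part p" "\<forall>x\<in>#drop_max p. x + k \<le> max_part p"
    note facts = partitions_perD[OF p(1)]
    note lower = raise_max_lower_max[OF facts(1) less_imp_le[OF p(2)] p(3)]
    have "size (lower_max k p) = size p"
      using lower facts(1) by (metis size_raise_max lower_max_def empty_not_add_mset)
    moreover have "\<forall>x\<in>#lower_max k p. 0 < x"
      using p(1,2) by (auto simp: lower_max_def partitions_per_iff dest: in_drop_max)
    moreover have "lower_max k p \<noteq> {#}" by (simp add: lower_max_def)
    ultimately show "lower_max k p \<in> partitions_per m"
      using p(1,2) by (simp add: partitions_per_iff lower(1))
  qed
qed

definition adjoin_max :: "nat multiset \<Rightarrow> nat multiset" where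
  "adjoin_max p = add_mset (Suc (max_part p)) p"

lemma max_part_adjoin_max: "max_part (adjoin_max q) = Suc (max_part q)"
  unfolding adjoin_max_def by (rule max_part_eqI) (auto dest: le_max_part)

lemma drop_max_adjoin_max: "drop_max (adjoin_max q) = q"
  by (simp add: drop_max_def max_part_adjoin_max) (simp add: adjoin_max_def)

lemma count_adjoin_max: "count (adjoin_max q) x = count q x + (if x = Suc (max_part q) then 1 else 0)"
  by (simp add: adjoin_max_def)

lemma set_mset_adjoin_max: "set_mset (adjoin_max q) = insert (Suc (max_part q)) (set_mset q)"
  by (simp add: adjoin_max_def)

lemma size_adjoin_max: "size (adjoin_max q) = Suc (size q)"
  by (simp add: adjoin_max_def)

lemma adjoin_max_not_empty: "adjoin_max q \<noteq> {#}"
  by (simp add: adjoin_max_def)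

lemma adjoin_max_drop_max:
  assumes "count p (max_part p) = 1" "max_part p - 1 \<in># p" "0 < max_part p"
  shows "drop_max p \<noteq> {#}" "max_part (drop_max p) = max_part p - 1" "adjoin_max (drop_max p) = p"
proof -
  have "max_part p - 1 \<noteq> max_part p" using assms(3) by simp
  then have "max_part p - 1 \<in># drop_max p"
    using assms(2) by (simp add: count_drop_max flip: count_greater_zero_iff)
  then show "drop_max p \<noteq> {#}" by auto
  show max: "max_part (drop_max p) = max_part p - 1"
    using \<open>max_part p - 1 \<in># drop_max p\<close> drop_max_less_max_part[OF assms(1)]
    by (intro max_part_eqI) fastforce+
  have "p \<noteq> {#}" using assms(2) by auto
  then show "adjoin_max (drop_max p) = p"
    using assms(3) by (simp add: adjoin_max_def max add_mset_max_drop_max)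
qed

lemma bij_betw_adjoin_max:
  "bij_betw adjoin_max (partitions_per m)
    {p \<in> partitions_per (Suc (Suc m)). count p (max_part p) = 1 \<and> max_part p - 1 \<in># p}"
proof (rule bij_betw_byWitness[where f' = drop_max])
  show "\<forall>q\<in>partitions_per m. drop_max (adjoin_max q) = q"
    by (simp add: drop_max_adjoin_max)
  show "\<forall>p\<in>{p \<in> partitions_per (Suc (Suc m)). count p (max_part p) = 1 \<and> max_part p - 1 \<in># p}.
      adjoin_max (drop_max p) = p"
    using partitions_perD(2) by (auto simp: adjoin_max_drop_max)
  show "adjoin_max ` partitions_per m
    \<subseteq> {p \<in> partitions_per (Suc (Suc m)). count p (max_part p) = 1 \<and> max_part p - 1 \<in># p}"
  proof safe
    fix q assume q: "q \<in> partitions_per m"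
    show "adjoin_max q \<in> partitions_per (Suc (Suc m))"
      using q by (auto simp: partitions_per_iff max_part_adjoin_max set_mset_adjoin_max
          size_adjoin_max adjoin_max_not_empty)
    show "count (adjoin_max q) (max_part (adjoin_max q)) = 1"
      by (simp add: max_part_adjoin_max count_adjoin_max count_Suc_max_part)
    show "max_part (adjoin_max q) - 1 \<in># adjoin_max q"
      using max_part_in[OF partitions_perD(1)[OF q]]
      by (simp add: max_part_adjoin_max set_mset_adjoin_max)
  qed
  show "drop_max ` {p \<in> partitions_per (Suc (Suc m)). count p (max_part p) = 1 \<and> max_part p - 1 \<in># p}
    \<subseteq> partitions_per m"
  proof safe
    fix p assume p: "p \<in> partitions_per (Suc (Suc m))" "count p (max_part p) = 1" "max_part p - 1 \<in># p"
    note facts = partitions_perD[OF p(1)]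
    show "drop_max p \<in> partitions_per m"
      using p facts adjoin_max_drop_max[OF p(2,3) facts(2)]
      by (auto simp: partitions_per_iff size_drop_max dest: in_drop_max)
  qed
qed

section \<open>Odd partitions and partitions into distinct parts\<close>

lemma all_odd_raise_max_iff:
  "q \<noteq> {#} \<Longrightarrow> even k \<Longrightarrow> (\<forall>x\<in>#raise_max k q. odd x) \<longleftrightarrow> (\<forall>x\<in>#q. odd x)"
  by (simp add: set_mset_raise_max set_mset_eq_insert_drop_max[of q])

lemma bij_betw_dup_max_calG:
  "bij_betw dup_max (calG (Suc n)) {p \<in> calG (Suc (Suc n)). 2 \<le> count p (max_part p)}"
  by (rule bij_betw_restrict[OF bij_betw_dup_max])
    (use bij_betw_apply[OF bij_betw_dup_max] partitions_perD(1) in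
      \<open>auto simp: calG_def set_mset_dup_max\<close>)

lemma bij_betw_raise_max_calG:
  "bij_betw (raise_max 2) (calG n) {p \<in> calG (Suc (Suc n)). count p (max_part p) = 1}"
proof (rule bij_betw_restrict[OF bij_betw_raise_max])
  show "{p \<in> calG (Suc (Suc n)). count p (max_part p) = 1}
    \<subseteq> {p \<in> partitions_per (n + 2). 2 < max_part p \<and> (\<forall>x\<in>#drop_max p. x + 2 \<le> max_part p)}"
  proof safe
    fix p assume p: "p \<in> calG (Suc (Suc n))" "count p (max_part p) = 1"
    then have pp: "p \<in> partitions_per (Suc (Suc n))" and odd: "\<forall>x\<in>#p. odd x"
      by (auto simp: calG_def)
    have "odd (max_part p)" using odd max_part_in[OF partitions_perD(1)[OF pp]] by blast
    moreover have "max_part p \<noteq> 1"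
      using p(2) partitions_per_max_part_1[OF pp] by auto
    ultimately show "2 < max_part p"
      using partitions_perD(2)[OF pp] by presburger
    show "x + 2 \<le> max_part p" if "x \<in># drop_max p" for x
    proof -
      have "x < max_part p" "odd x"
        using drop_max_less_max_part[OF p(2) that] odd in_drop_max[OF that] by auto
      then show ?thesis using \<open>odd (max_part p)\<close> by presburger
    qed
  qed (auto simp: calG_def)
next
  fix q assume q: "q \<in> partitions_per n"
  have ne: "q \<noteq> {#}" using partitions_perD(1)[OF q] .
  have "raise_max 2 q \<in> partitions_per (n + 2)" "count (raise_max 2 q) (max_part (raise_max 2 q)) = 1"
    using bij_betw_apply[OF bij_betw_raise_max[of 2] q] count_max_raise_max[OF ne] by auto
  then show "raise_max 2 q \<in> {p \<in> calG (Suc (Suc n)). count p (max_part p) = 1} \<longleftrightarrow> q \<in> calG n"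
    using q by (simp add: calG_def all_odd_raise_max_iff[OF ne])
qed (auto simp: calG_def)

lemma count_max_part_if_distinct:
  assumes "p \<noteq> {#}" "\<forall>x. count p x \<le> 1"
  shows "count p (max_part p) = 1"
  using count_max_part_pos[OF assms(1)] assms(2)[rule_format, of "max_part p"] by linarith

lemma distinct_raise_max_iff:
  "(\<forall>x. count (raise_max 1 q) x \<le> 1) \<and> max_part q \<notin># raise_max 1 q \<longleftrightarrow> (\<forall>x. count q x \<le> 1)"
proof -
  have count: "count (raise_max 1 q) x
      = (if x = Suc (max_part q) then 1 else count q x - (if x = max_part q then 1 else 0))" for x
    using count_Suc_max_part[of q] by (simp add: count_raise_max)
  show ?thesis
  proof
    assume raise: "(\<forall>x. count (raise_max 1 q) x \<le> 1) \<and> max_part q \<notin># raise_max 1 q"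
    show "\<forall>x. count q x \<le> 1"
    proof
      fix x
      consider "x = max_part q" | "x = Suc (max_part q)" | "x \<noteq> max_part q" "x \<noteq> Suc (max_part q)"
        by blast
      then show "count q x \<le> 1"
      proof cases
        case 1 then show ?thesis using raise count[of x] by (simp add: not_in_iff)
      next
        case 2 then show ?thesis using count_Suc_max_part[of q] by simp
      next
        case 3
        have "count (raise_max 1 q) x \<le> 1" using raise by blast
        then show ?thesis using 3 count[of x] by simp
      qed
    qed
  next
    assume distinct: "\<forall>x. count q x \<le> 1"
    have "count (raise_max 1 q) x \<le> 1" for x
      using distinct[rule_format, of x] count[of x] by auto
    moreover have "count (raise_max 1 q) (max_part q) = 0"
      using distinct[rule_format, of "max_part q"] count[of "max_part q"] by simp
    ultimately show "(\<forall>x. count (raise_max 1 q) x \<le> 1) \<and> max_part q \<notin># raise_max 1 q"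
      by (simp add: not_in_iff)
  qed
qed

lemma distinct_adjoin_max_iff:
  "(\<forall>x. count (adjoin_max q) x \<le> 1) \<longleftrightarrow> (\<forall>x. count q x \<le> 1)"
  using count_Suc_max_part[of q] by (auto simp: count_adjoin_max) (metis add_0 le_add1)

lemma bij_betw_raise_max_calH:
  "bij_betw (raise_max 1) (calH (Suc n)) {p \<in> calH (Suc (Suc n)). max_part p - 1 \<notin># p}"
proof (rule bij_betw_restrict[OF bij_betw_raise_max])
  show "{p \<in> calH (Suc (Suc n)). max_part p - 1 \<notin># p}
    \<subseteq> {p \<in> partitions_per (Suc n + 1). 1 < max_part p \<and> (\<forall>x\<in>#drop_max p. x + 1 \<le> max_part p)}"
  proof safe
    fix p assume p: "p \<in> calH (Suc (Suc n))"
    then have pp: "p \<in> partitions_per (Suc (Suc n))" and dist: "\<forall>x. count p x \<le> 1"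
      by (auto simp: calH_def)
    then have cnt: "count p (max_part p) = 1"
      using count_max_part_if_distinct partitions_perD(1) by blast
    show "p \<in> partitions_per (Suc n + 1)" using pp by simp
    have "max_part p \<noteq> 1"
    proof
      assume "max_part p = 1"
      then have "count p 1 = Suc (Suc n)" by (rule partitions_per_max_part_1[OF pp])
      then show False using dist[rule_format, of 1] by simp
    qed
    then show "1 < max_part p" using partitions_perD(2)[OF pp] by simp
    show "x + 1 \<le> max_part p" if "x \<in># drop_max p" for x
      using drop_max_less_max_part[OF cnt that] by simp
  qed
next
  fix q assume q: "q \<in> partitions_per (Suc n)"
  have ne: "q \<noteq> {#}" using partitions_perD(1)[OF q] .
  have "raise_max 1 q \<in> partitions_per (Suc (Suc n))"
    using bij_betw_apply[OF bij_betw_raise_max[of 1] q] by simp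
  then show "raise_max 1 q \<in> {p \<in> calH (Suc (Suc n)). max_part p - 1 \<notin># p} \<longleftrightarrow> q \<in> calH (Suc n)"
    using q distinct_raise_max_iff[of q] by (simp add: calH_def max_part_raise_max[OF ne])
qed (auto simp: calH_def)

lemma bij_betw_adjoin_max_calH:
  "bij_betw adjoin_max (calH n) {p \<in> calH (Suc (Suc n)). max_part p - 1 \<in># p}"
proof (rule bij_betw_restrict[OF bij_betw_adjoin_max])
  show "{p \<in> calH (Suc (Suc n)). max_part p - 1 \<in># p}
    \<subseteq> {p \<in> partitions_per (Suc (Suc n)). count p (max_part p) = 1 \<and> max_part p - 1 \<in># p}"
    using count_max_part_if_distinct partitions_perD(1) by (auto simp: calH_def)
next
  fix q assume "q \<in> partitions_per n"
  then show "adjoin_max q \<in> {p \<in> calH (Suc (Suc n)). max_part p - 1 \<in># p} \<longleftrightarrow> q \<in> calH n"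
    using bij_betw_apply[OF bij_betw_adjoin_max] distinct_adjoin_max_iff by (auto simp: calH_def)
qed (auto simp: calH_def)

section \<open>One even part value, one repeated part value\<close>

lemma even_parts_drop_max:
  assumes "q \<noteq> {#}" "odd (max_part q)"
  shows "{x \<in> set_mset (drop_max q). even x} = {x \<in> set_mset q. even x}"
proof -
  have "set_mset q = insert (max_part q) (set_mset (drop_max q))"
    by (rule set_mset_eq_insert_drop_max[OF assms(1)])
  then show ?thesis using assms(2) by auto
qed

lemma even_parts_raise_max:
  assumes "q \<noteq> {#}" "even k" "odd (max_part q)"
  shows "{x \<in> set_mset (raise_max k q). even x} = {x \<in> set_mset q. even x}"
  unfolding set_mset_raise_max even_parts_drop_max[OF assms(1,3), symmetric]
  by (rule even_parts_insert_odd) (use assms(2,3) in simp)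

lemma Suc_max_part_not_in_raise_max: "1 < k \<Longrightarrow> Suc (max_part q) \<notin># raise_max k q"
  using le_max_part[OF in_drop_max, of "Suc (max_part q)" q] by (auto simp: set_mset_raise_max)

lemma one_even_raise_max_iff:
  assumes "q \<noteq> {#}"
  shows "card {x \<in> set_mset (raise_max 1 q). even x} = 1 \<and> odd (max_part q) \<longleftrightarrow> (\<forall>x\<in>#q. odd x)"
    (is "card ?E = 1 \<and> _ \<longleftrightarrow> _")
proof
  assume one: "card ?E = 1 \<and> odd (max_part q)"
  then have new: "Suc (max_part q) \<in> ?E" by (simp add: set_mset_raise_max)
  have "odd x" if "x \<in># drop_max q" for x
  proof
    assume "even x"
    then have "x \<in> ?E" using that by (simp add: set_mset_raise_max)
    then have "x = Suc (max_part q)" using card_le_1_eq[of ?E x "Suc (max_part q)"] new one by simp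
    then show False using le_max_part[OF in_drop_max[OF that]] by simp
  qed
  then show "\<forall>x\<in>#q. odd x"
    using one set_mset_eq_insert_drop_max[OF assms] by simp
next
  assume odd: "\<forall>x\<in>#q. odd x"
  then have "odd (max_part q)" using max_part_in[OF assms] by blast
  moreover have "\<forall>x\<in>#drop_max q. odd x" using odd in_drop_max by blast
  then have "?E = {Suc (max_part q)}"
  proof (intro equalityI subsetI)
    fix x assume "x \<in> ?E"
    then have "x = Suc (max_part q) \<or> x \<in># drop_max q" "even x" by (simp_all add: set_mset_raise_max)
    then show "x \<in> {Suc (max_part q)}" using \<open>\<forall>x\<in>#drop_max q. odd x\<close> by blast
  qed (use \<open>odd (max_part q)\<close> in \<open>simp add: set_mset_raise_max\<close>)
  ultimately show "card ?E = 1 \<and> odd (max_part q)" by simp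
qed

lemma calG1_max_part_gap:
  assumes "p \<in> calG1 m" "count p (max_part p) = 1" "odd (max_part p)" "max_part p - 1 \<notin># p"
  shows "2 < max_part p" "\<forall>x\<in>#drop_max p. x + 2 \<le> max_part p"
proof -
  have pp: "p \<in> partitions_per m" and one: "card {x \<in> set_mset p. even x} = 1"
    using assms(1) by (auto simp: calG1_def)
  obtain e where "{x \<in> set_mset p. even x} = {e}" using one by (rule card_1_singletonE)
  then have "e \<in># p" "even e" by auto
  moreover have "0 < e" using pp \<open>e \<in># p\<close> by (simp add: partitions_per_iff)
  ultimately have "2 \<le> e" "e \<le> max_part p" using le_max_part[of e p] by presburger+
  then show "2 < max_part p" using assms(3) by presburger
  show "\<forall>x\<in>#drop_max p. x + 2 \<le> max_part p"
  proof
    fix x assume x: "x \<in># drop_max p"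
    have "x \<noteq> max_part p - 1" using assms(4) in_drop_max[OF x] by auto
    then show "x + 2 \<le> max_part p" using drop_max_less_max_part[OF assms(2) x] by linarith
  qed
qed

lemma bij_betw_dup_max_calG1:
  "bij_betw dup_max (calG1 (Suc n)) {p \<in> calG1 (Suc (Suc n)). 2 \<le> count p (max_part p)}"
  by (rule bij_betw_restrict[OF bij_betw_dup_max])
    (use bij_betw_apply[OF bij_betw_dup_max] partitions_perD(1) in
      \<open>auto simp: calG1_def set_mset_dup_max\<close>)

lemma bij_betw_raise_max_calG_calG1:
  "bij_betw (raise_max 1) (calG (Suc n)) {p \<in> calG1 (Suc (Suc n)). count p (max_part p) = 1 \<and> even (max_part p)}"
proof (rule bij_betw_restrict[OF bij_betw_raise_max])
  show "{p \<in> calG1 (Suc (Suc n)). count p (max_part p) = 1 \<and> even (max_part p)}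
    \<subseteq> {p \<in> partitions_per (Suc n + 1). 1 < max_part p \<and> (\<forall>x\<in>#drop_max p. x + 1 \<le> max_part p)}"
  proof safe
    fix p assume p: "p \<in> calG1 (Suc (Suc n))" "count p (max_part p) = 1" "even (max_part p)"
    then have pp: "p \<in> partitions_per (Suc (Suc n))" by (simp add: calG1_def)
    then show "p \<in> partitions_per (Suc n + 1)" by simp
    show "1 < max_part p" using partitions_perD(2)[OF pp] p(3) by presburger
    show "x + 1 \<le> max_part p" if "x \<in># drop_max p" for x
      using drop_max_less_max_part[OF p(2) that] by simp
  qed
next
  fix q assume q: "q \<in> partitions_per (Suc n)"
  have ne: "q \<noteq> {#}" using partitions_perD(1)[OF q] .
  have "raise_max 1 q \<in> partitions_per (Suc (Suc n))"
    "count (raise_max 1 q) (max_part (raise_max 1 q)) = 1"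
    using bij_betw_apply[OF bij_betw_raise_max[of 1] q] count_max_raise_max[OF ne] by auto
  then show "raise_max 1 q \<in> {p \<in> calG1 (Suc (Suc n)). count p (max_part p) = 1 \<and> even (max_part p)}
      \<longleftrightarrow> q \<in> calG (Suc n)"
    using q one_even_raise_max_iff[OF ne] by (auto simp: calG_def calG1_def max_part_raise_max[OF ne])
qed (auto simp: calG_def)

lemma bij_betw_adjoin_max_calG1:
  "bij_betw adjoin_max {q \<in> calG1 n. even (max_part q)}
    {p \<in> calG1 (Suc (Suc n)). count p (max_part p) = 1 \<and> odd (max_part p) \<and> max_part p - 1 \<in># p}"
proof (rule bij_betw_restrict[OF bij_betw_adjoin_max])
  fix q assume q: "q \<in> partitions_per n"
  have "{x \<in> set_mset (adjoin_max q). even x} = {x \<in> set_mset q. even x}" if "even (max_part q)"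
    unfolding set_mset_adjoin_max by (rule even_parts_insert_odd) (use that in simp)
  then show "adjoin_max q \<in> {p \<in> calG1 (Suc (Suc n)). count p (max_part p) = 1 \<and> odd (max_part p)
      \<and> max_part p - 1 \<in># p} \<longleftrightarrow> q \<in> {q \<in> calG1 n. even (max_part q)}"
    using q bij_betw_apply[OF bij_betw_adjoin_max q] by (auto simp: calG1_def max_part_adjoin_max)
qed (auto simp: calG1_def)

lemma bij_betw_raise_max_calG1:
  "bij_betw (raise_max 2) {q \<in> calG1 n. odd (max_part q)}
    {p \<in> calG1 (Suc (Suc n)). count p (max_part p) = 1 \<and> odd (max_part p) \<and> max_part p - 1 \<notin># p}"
proof (rule bij_betw_restrict[OF bij_betw_raise_max])
  show "{p \<in> calG1 (Suc (Suc n)). count p (max_part p) = 1 \<and> odd (max_part p) \<and> max_part p - 1 \<notin># p}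
    \<subseteq> {p \<in> partitions_per (n + 2). 2 < max_part p \<and> (\<forall>x\<in>#drop_max p. x + 2 \<le> max_part p)}"
    using calG1_max_part_gap by (auto simp: calG1_def)
next
  fix q assume q: "q \<in> partitions_per n"
  have ne: "q \<noteq> {#}" using partitions_perD(1)[OF q] .
  show "raise_max 2 q \<in> {p \<in> calG1 (Suc (Suc n)). count p (max_part p) = 1
      \<and> odd (max_part p) \<and> max_part p - 1 \<notin># p} \<longleftrightarrow> q \<in> {q \<in> calG1 n. odd (max_part q)}"
    using q bij_betw_apply[OF bij_betw_raise_max[of 2] q] count_max_raise_max[OF ne, of 2]
      Suc_max_part_not_in_raise_max[of 2 q] even_parts_raise_max[OF ne, of 2]
    by (cases "odd (max_part q)") (simp_all add: calG1_def max_part_raise_max[OF ne])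
qed (auto simp: calG1_def)

lemma finite_repeated_parts: "finite {x. 2 \<le> count p x}"
  by (rule finite_subset[of _ "set_mset p"]) (auto intro: count_inI)

lemma repeated_parts_dup_max:
  "2 \<le> count q (max_part q) \<Longrightarrow> {x. 2 \<le> count (dup_max q) x} = {x. 2 \<le> count q x}"
  by (rule Collect_cong) (auto simp: count_dup_max intro: count_inI)

lemma repeated_parts_raise_max:
  "count q (max_part q) = 1 \<Longrightarrow> {x. 2 \<le> count (raise_max 1 q) x} = {x. 2 \<le> count q x}"
  using count_Suc_max_part[of q] by (intro Collect_cong) (simp add: count_raise_max)

lemma repeated_parts_adjoin_max: "{x. 2 \<le> count (adjoin_max q) x} = {x. 2 \<le> count q x}"
  using count_Suc_max_part[of q] by (intro Collect_cong) (simp add: count_adjoin_max)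

lemma one_repeated_dup_max_iff:
  assumes "q \<noteq> {#}"
  shows "card {x. 2 \<le> count (dup_max q) x} = 1 \<and> count q (max_part q) = 1 \<longleftrightarrow> (\<forall>x. count q x \<le> 1)"
    (is "card ?R = 1 \<and> _ \<longleftrightarrow> _")
proof
  assume one: "card ?R = 1 \<and> count q (max_part q) = 1"
  then have max: "max_part q \<in> ?R" by (simp add: count_dup_max)
  show "\<forall>x. count q x \<le> 1"
  proof (rule ccontr)
    assume "\<not> (\<forall>x. count q x \<le> 1)"
    then obtain x where "\<not> count q x \<le> 1" by blast
    then have x: "2 \<le> count q x" by simp
    then have "x \<in> ?R" by (simp add: count_dup_max)
    then have "x = max_part q"
      using card_le_1_eq[OF finite_repeated_parts, of "dup_max q" x "max_part q"] max one by simp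
    then show False using x one by simp
  qed
next
  assume distinct: "\<forall>x. count q x \<le> 1"
  then have max: "count q (max_part q) = 1" by (rule count_max_part_if_distinct[OF assms])
  have "?R = {max_part q}"
  proof (rule set_eqI)
    fix x show "x \<in> ?R \<longleftrightarrow> x \<in> {max_part q}"
      using distinct[rule_format, of x] max by (auto simp: count_dup_max)
  qed
  then show "card ?R = 1 \<and> count q (max_part q) = 1" using max by simp
qed

lemma bij_betw_dup_max_calH1:
  "bij_betw dup_max {q \<in> calH1 (Suc n). 2 \<le> count q (max_part q)}
    {p \<in> calH1 (Suc (Suc n)). 3 \<le> count p (max_part p)}"
proof (rule bij_betw_restrict[OF bij_betw_dup_max])
  fix q assume q: "q \<in> partitions_per (Suc n)"
  have ne: "q \<noteq> {#}" using partitions_perD(1)[OF q] .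
  show "dup_max q \<in> {p \<in> calH1 (Suc (Suc n)). 3 \<le> count p (max_part p)}
      \<longleftrightarrow> q \<in> {q \<in> calH1 (Suc n). 2 \<le> count q (max_part q)}"
    using q bij_betw_apply[OF bij_betw_dup_max q] repeated_parts_dup_max[of q]
    by (cases "2 \<le> count q (max_part q)")
      (simp_all add: calH1_def max_part_dup_max[OF ne] count_dup_max)
qed (auto simp: calH1_def)

lemma bij_betw_dup_max_calH_calH1:
  "bij_betw dup_max (calH (Suc n)) {p \<in> calH1 (Suc (Suc n)). count p (max_part p) = 2}"
proof (rule bij_betw_restrict[OF bij_betw_dup_max])
  fix q assume q: "q \<in> partitions_per (Suc n)"
  have ne: "q \<noteq> {#}" using partitions_perD(1)[OF q] .
  show "dup_max q \<in> {p \<in> calH1 (Suc (Suc n)). count p (max_part p) = 2} \<longleftrightarrow> q \<in> calH (Suc n)"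
    using q bij_betw_apply[OF bij_betw_dup_max q] one_repeated_dup_max_iff[OF ne]
    by (auto simp: calH_def calH1_def max_part_dup_max[OF ne] count_dup_max)
qed (auto simp: calH_def calH1_def)

lemma bij_betw_raise_max_calH1:
  "bij_betw (raise_max 1) {q \<in> calH1 (Suc n). count q (max_part q) = 1}
    {p \<in> calH1 (Suc (Suc n)). count p (max_part p) = 1 \<and> max_part p - 1 \<notin># p}"
proof (rule bij_betw_restrict[OF bij_betw_raise_max])
  show "{p \<in> calH1 (Suc (Suc n)). count p (max_part p) = 1 \<and> max_part p - 1 \<notin># p}
    \<subseteq> {p \<in> partitions_per (Suc n + 1). 1 < max_part p \<and> (\<forall>x\<in>#drop_max p. x + 1 \<le> max_part p)}"
  proof safe
    fix p assume p: "p \<in> calH1 (Suc (Suc n))" "count p (max_part p) = 1"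
    then have pp: "p \<in> partitions_per (Suc (Suc n))" and one: "card {x. 2 \<le> count p x} = 1"
      by (auto simp: calH1_def)
    then show "p \<in> partitions_per (Suc n + 1)" by simp
    obtain e where "{x. 2 \<le> count p x} = {e}" using one by (rule card_1_singletonE)
    then have e: "2 \<le> count p e" by auto
    then have "e \<noteq> max_part p" "e \<in># p" using p(2) by (auto simp flip: count_greater_zero_iff)
    moreover have "0 < e" "e \<le> max_part p"
      using pp \<open>e \<in># p\<close> le_max_part[of e p] by (auto simp: partitions_per_iff)
    ultimately show "1 < max_part p" by linarith
    show "x + 1 \<le> max_part p" if "x \<in># drop_max p" for x
      using drop_max_less_max_part[OF p(2) that] by simp
  qed
next
  fix q assume q: "q \<in> partitions_per (Suc n)"
  have ne: "q \<noteq> {#}" using partitions_perD(1)[OF q] .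
  have "max_part q \<notin># raise_max 1 q \<longleftrightarrow> count q (max_part q) \<le> 1"
    by (simp add: count_raise_max not_in_iff)
  also have "\<dots> \<longleftrightarrow> count q (max_part q) = 1"
    using count_max_part_pos[OF ne] by presburger
  finally have "max_part q \<notin># raise_max 1 q \<longleftrightarrow> count q (max_part q) = 1" .
  then show "raise_max 1 q \<in> {p \<in> calH1 (Suc (Suc n)). count p (max_part p) = 1 \<and> max_part p - 1 \<notin># p}
      \<longleftrightarrow> q \<in> {q \<in> calH1 (Suc n). count q (max_part q) = 1}"
    using q bij_betw_apply[OF bij_betw_raise_max[of 1] q] count_max_raise_max[OF ne, of 1]
      repeated_parts_raise_max[of q]
    by (cases "count q (max_part q) = 1") (simp_all add: calH1_def max_part_raise_max[OF ne])
qed (auto simp: calH1_def)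

lemma bij_betw_adjoin_max_calH1:
  "bij_betw adjoin_max (calH1 n)
    {p \<in> calH1 (Suc (Suc n)). count p (max_part p) = 1 \<and> max_part p - 1 \<in># p}"
  by (rule bij_betw_restrict[OF bij_betw_adjoin_max])
    (use bij_betw_apply[OF bij_betw_adjoin_max] in \<open>auto simp: calH1_def repeated_parts_adjoin_max\<close>)

section \<open>Recurrences\<close>

lemma finite_calG: "finite (calG m)" and finite_calH: "finite (calH m)"
  and finite_calG1: "finite (calG1 m)" and finite_calH1: "finite (calH1 m)"
  unfolding calG_def calH_def calG1_def calH1_def using finite_partitions_per by simp_all

lemma sum_calG_Suc_Suc:
  "(\<Sum>p\<in>calG (Suc (Suc n)). w p) = (\<Sum>q\<in>calG (Suc n). w (dup_max q)) + (\<Sum>q\<in>calG n. w (raise_max 2 q))"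
proof -
  have one: "{p \<in> calG (Suc (Suc n)). \<not> 2 \<le> count p (max_part p)}
      = {p \<in> calG (Suc (Suc n)). count p (max_part p) = 1}"
    by (rule Collect_not_count_max_part_ge_2) (auto simp: calG_def)
  have "(\<Sum>p\<in>calG (Suc (Suc n)). w p) = (\<Sum>p\<in>{p \<in> calG (Suc (Suc n)). 2 \<le> count p (max_part p)}. w p)
      + (\<Sum>p\<in>{p \<in> calG (Suc (Suc n)). \<not> 2 \<le> count p (max_part p)}. w p)"
    by (rule sum_filter_split[OF finite_calG])
  also have "\<dots> = (\<Sum>q\<in>calG (Suc n). w (dup_max q)) + (\<Sum>q\<in>calG n. w (raise_max 2 q))"
    by (simp only: one sum.reindex_bij_betw[OF bij_betw_dup_max_calG] sum.reindex_bij_betw[OF bij_betw_raise_max_calG])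
  finally show ?thesis .
qed

lemma sum_calH_Suc_Suc:
  "(\<Sum>p\<in>calH (Suc (Suc n)). w p) = (\<Sum>q\<in>calH (Suc n). w (raise_max 1 q)) + (\<Sum>q\<in>calH n. w (adjoin_max q))"
proof -
  have "(\<Sum>p\<in>calH (Suc (Suc n)). w p) = (\<Sum>p\<in>{p \<in> calH (Suc (Suc n)). max_part p - 1 \<notin># p}. w p)
      + (\<Sum>p\<in>{p \<in> calH (Suc (Suc n)). \<not> max_part p - 1 \<notin># p}. w p)"
    by (rule sum_filter_split[OF finite_calH])
  also have "\<dots> = (\<Sum>q\<in>calH (Suc n). w (raise_max 1 q)) + (\<Sum>q\<in>calH n. w (adjoin_max q))"
    by (simp only: not_not sum.reindex_bij_betw[OF bij_betw_raise_max_calH]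
        sum.reindex_bij_betw[OF bij_betw_adjoin_max_calH])
  finally show ?thesis .
qed

lemma card_calG_Suc_Suc: "card (calG (Suc (Suc n))) = card (calG (Suc n)) + card (calG n)"
  using sum_calG_Suc_Suc[of "\<lambda>_. 1::nat" n] by simp

lemma card_calH_Suc_Suc: "card (calH (Suc (Suc n))) = card (calH (Suc n)) + card (calH n)"
  using sum_calH_Suc_Suc[of "\<lambda>_. 1::nat" n] by simp

lemma g_Suc_Suc: "g (Suc (Suc n)) = g (Suc n) + g n + card (calG (Suc n))"
proof -
  have "(\<Sum>q\<in>calG n. size (raise_max 2 q)) = g n"
    unfolding g_def by (rule sum.cong) (simp_all add: calG_def size_raise_max partitions_per_iff)
  then show ?thesis using sum_calG_Suc_Suc[of size n] by (simp add: g_def size_dup_max sum_Suc)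
qed

lemma h_Suc_Suc: "h (Suc (Suc n)) = h (Suc n) + h n + card (calH n)"
proof -
  have "(\<Sum>q\<in>calH (Suc n). size (raise_max 1 q)) = h (Suc n)"
    unfolding h_def by (rule sum.cong) (simp_all add: calH_def size_raise_max partitions_per_iff)
  then show ?thesis using sum_calH_Suc_Suc[of size n] by (simp add: h_def size_adjoin_max sum_Suc)
qed

lemma card_calG1_Suc_Suc:
  "card (calG1 (Suc (Suc n))) = card (calG1 (Suc n)) + card (calG1 n) + card (calG (Suc n))"
proof -
  let ?X = "calG1 (Suc (Suc n))" and ?c = "\<lambda>p. count p (max_part p)"
  have sub: "?X \<subseteq> partitions_per (Suc (Suc n))" by (auto simp: calG1_def)
  have "card ?X = card {p \<in> ?X. 2 \<le> ?c p} + card {p \<in> ?X. ?c p = 1}"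
    using card_filter_split[OF finite_calG1[of "Suc (Suc n)"], where P = "\<lambda>p. 2 \<le> ?c p"]
    unfolding Collect_not_count_max_part_ge_2[OF sub] .
  moreover have "card {p \<in> ?X. ?c p = 1} = card {p \<in> ?X. ?c p = 1 \<and> even (max_part p)}
      + card {p \<in> ?X. ?c p = 1 \<and> odd (max_part p)}"
    by (rule card_filter_conj_split[OF finite_calG1])
  moreover have "card {p \<in> ?X. ?c p = 1 \<and> odd (max_part p)}
      = card {p \<in> ?X. ?c p = 1 \<and> odd (max_part p) \<and> max_part p - 1 \<in># p}
      + card {p \<in> ?X. ?c p = 1 \<and> odd (max_part p) \<and> max_part p - 1 \<notin># p}"
    using card_filter_conj_split[OF finite_calG1[of "Suc (Suc n)"], where Q = "\<lambda>p. ?c p = 1 \<and> odd (max_part p)"]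
    by (simp only: conj_assoc)
  moreover have "card (calG1 n) = card {q \<in> calG1 n. even (max_part q)} + card {q \<in> calG1 n. odd (max_part q)}"
    by (rule card_filter_split[OF finite_calG1])
  ultimately show ?thesis
    using bij_betw_same_card[OF bij_betw_dup_max_calG1[of n]] bij_betw_same_card[OF bij_betw_raise_max_calG_calG1[of n]]
      bij_betw_same_card[OF bij_betw_adjoin_max_calG1[of n]] bij_betw_same_card[OF bij_betw_raise_max_calG1[of n]]
    by linarith
qed

lemma card_calH1_Suc_Suc:
  "card (calH1 (Suc (Suc n))) = card (calH1 (Suc n)) + card (calH1 n) + card (calH (Suc n))"
proof -
  let ?X = "calH1 (Suc (Suc n))" and ?Y = "calH1 (Suc n)" and ?c = "\<lambda>p. count p (max_part p)"
  have subX: "?X \<subseteq> partitions_per (Suc (Suc n))" and subY: "?Y \<subseteq> partitions_per (Suc n)"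
    by (auto simp: calH1_def)
  have "card ?X = card {p \<in> ?X. 2 \<le> ?c p} + card {p \<in> ?X. ?c p = 1}"
    using card_filter_split[OF finite_calH1[of "Suc (Suc n)"], where P = "\<lambda>p. 2 \<le> ?c p"]
    unfolding Collect_not_count_max_part_ge_2[OF subX] .
  moreover have "card {p \<in> ?X. 2 \<le> ?c p} = card {p \<in> ?X. 3 \<le> ?c p} + card {p \<in> ?X. ?c p = 2}"
  proof -
    have "{p \<in> ?X. 2 \<le> ?c p \<and> 3 \<le> ?c p} = {p \<in> ?X. 3 \<le> ?c p}"
      "{p \<in> ?X. 2 \<le> ?c p \<and> \<not> 3 \<le> ?c p} = {p \<in> ?X. ?c p = 2}"
      by (rule Collect_cong, linarith)+
    then show ?thesis
      using card_filter_conj_split[OF finite_calH1[of "Suc (Suc n)"], where Q = "\<lambda>p. 2 \<le> ?c p"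
          and P = "\<lambda>p. 3 \<le> ?c p"] by simp
  qed
  moreover have "card {p \<in> ?X. ?c p = 1} = card {p \<in> ?X. ?c p = 1 \<and> max_part p - 1 \<notin># p}
      + card {p \<in> ?X. ?c p = 1 \<and> \<not> max_part p - 1 \<notin># p}"
    by (rule card_filter_conj_split[OF finite_calH1])
  moreover have "card ?Y = card {q \<in> ?Y. 2 \<le> ?c q} + card {q \<in> ?Y. ?c q = 1}"
    using card_filter_split[OF finite_calH1[of "Suc n"], where P = "\<lambda>p. 2 \<le> ?c p"]
    unfolding Collect_not_count_max_part_ge_2[OF subY] .
  ultimately show ?thesis
    using bij_betw_same_card[OF bij_betw_dup_max_calH1[of n]] bij_betw_same_card[OF bij_betw_dup_max_calH_calH1[of n]]
      bij_betw_same_card[OF bij_betw_raise_max_calH1[of n]] bij_betw_same_card[OF bij_betw_adjoin_max_calH1[of n]]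
    by simp
qed

lemma partition_classes_0: "calG 0 = {}" "calH 0 = {}" "calG1 0 = {}" "calH1 0 = {}"
  by (simp_all add: calG_def calH_def calG1_def calH1_def partitions_per_0)

lemma partition_classes_1:
  "calG (Suc 0) = {{#1#}}" "calH (Suc 0) = {{#1#}}" "calG1 (Suc 0) = {}" "calH1 (Suc 0) = {}"
proof -
  have no_even: "{x. x = Suc 0 \<and> even x} = {}" by auto
  show "calG (Suc 0) = {{#1#}}" "calH (Suc 0) = {{#1#}}" "calG1 (Suc 0) = {}" "calH1 (Suc 0) = {}"
    by (auto simp: calG_def calH_def calG1_def calH1_def partitions_per_1[simplified] no_even)
qed

lemma g1_eq_card: "g1 n = card (calG1 n)" and h1_eq_card: "h1 n = card (calH1 n)"
  by (simp_all add: g1_def h1_def partition_classes_0)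

section \<open>Generating functions\<close>

definition ogf :: "(nat \<Rightarrow> nat) \<Rightarrow> rat fps" where
  "ogf f = Abs_fps (\<lambda>n. of_nat (f n))"

lemma ogf_zero: "ogf (\<lambda>_. 0) = 0"
  by (simp add: ogf_def fps_zero_def)

lemma ogf_shift:
  assumes "f 0 = 0"
  shows "fps_X ^ 2 * ogf (\<lambda>n. f (Suc n)) = fps_X * ogf f"
proof (rule fps_ext)
  fix n show "fps_nth (fps_X ^ 2 * ogf (\<lambda>n. f (Suc n))) n = fps_nth (fps_X * ogf f) n"
    using assms by (cases n) (simp_all add: ogf_def fps_X_power_mult_nth)
qed

lemma ogf_times_fib_denominator:
  assumes "\<And>n. f (Suc (Suc n)) = f (Suc n) + f n + t n"
  shows "ogf f * (1 - fps_X - fps_X ^ 2)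
    = fps_const (of_nat (f 0)) + fps_const (of_nat (f 1) - of_nat (f 0)) * fps_X + fps_X ^ 2 * ogf t"
proof (rule fps_ext)
  fix n
  have expand: "ogf f * (1 - fps_X - fps_X ^ 2) = ogf f - ogf f * fps_X - ogf f * fps_X ^ 2"
    by (simp add: algebra_simps)
  consider "n = 0" | "n = 1" | k where "n = Suc (Suc k)"
    by (metis One_nat_def not0_implies_Suc)
  from this show "fps_nth (ogf f * (1 - fps_X - fps_X ^ 2)) n
      = fps_nth (fps_const (of_nat (f 0)) + fps_const (of_nat (f 1) - of_nat (f 0)) * fps_X + fps_X ^ 2 * ogf t) n"
    unfolding expand by cases (simp_all add: ogf_def assms fps_X_power_mult_nth fps_X_power_mult_right_nth)
qed

lemma ogf_card_calG: "ogf (\<lambda>n. card (calG n)) * (1 - fps_X - fps_X ^ 2) = fps_X"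
  using ogf_times_fib_denominator[of "\<lambda>n. card (calG n)" "\<lambda>_. 0"] card_calG_Suc_Suc
  by (simp add: partition_classes_0 partition_classes_1 ogf_zero)

lemma ogf_card_calH: "ogf (\<lambda>n. card (calH n)) * (1 - fps_X - fps_X ^ 2) = fps_X"
  using ogf_times_fib_denominator[of "\<lambda>n. card (calH n)" "\<lambda>_. 0"] card_calH_Suc_Suc
  by (simp add: partition_classes_0 partition_classes_1 ogf_zero)

lemma ogf_g: "ogf g * (1 - fps_X - fps_X ^ 2) = fps_X + fps_X * ogf (\<lambda>n. card (calG n))"
  using ogf_times_fib_denominator[of g "\<lambda>n. card (calG (Suc n))"] g_Suc_Suc
    ogf_shift[of "\<lambda>n. card (calG n)"]
  by (simp add: g_def partition_classes_0 partition_classes_1)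

lemma ogf_h: "ogf h * (1 - fps_X - fps_X ^ 2) = fps_X + fps_X ^ 2 * ogf (\<lambda>n. card (calH n))"
  using ogf_times_fib_denominator[of h "\<lambda>n. card (calH n)"] h_Suc_Suc
  by (simp add: h_def partition_classes_0 partition_classes_1)

lemma ogf_g1: "ogf g1 * (1 - fps_X - fps_X ^ 2) = fps_X * ogf (\<lambda>n. card (calG n))"
  using ogf_times_fib_denominator[of g1 "\<lambda>n. card (calG (Suc n))"] card_calG1_Suc_Suc
    ogf_shift[of "\<lambda>n. card (calG n)"]
  by (simp add: g1_eq_card partition_classes_0 partition_classes_1)

lemma ogf_h1: "ogf h1 * (1 - fps_X - fps_X ^ 2) = fps_X * ogf (\<lambda>n. card (calH n))"
  using ogf_times_fib_denominator[of h1 "\<lambda>n. card (calH (Suc n))"] card_calH1_Suc_Suc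
    ogf_shift[of "\<lambda>n. card (calH n)"]
  by (simp add: h1_eq_card partition_classes_0 partition_classes_1)

lemma Abs_fps_backward_difference:
  "f 0 = 0 \<Longrightarrow> Abs_fps (\<lambda>M. if M = 0 then 0 else of_int (int (f M) - int (f (M - 1))) :: rat)
    = (1 - fps_X) * ogf f"
  by (rule fps_ext) (simp add: ogf_def algebra_simps)

lemma Abs_fps_difference:
  "f 0 = f' 0 \<Longrightarrow> Abs_fps (\<lambda>M. if M = 0 then 0 else of_int (int (f M) - int (f' M)) :: rat)
    = ogf f - ogf f'"
  by (rule fps_ext) (simp add: ogf_def)

lemma fib_denominator_ne_0: "(1 - fps_X - fps_X ^ 2 :: 'a::field fps) \<noteq> 0"
proof
  assume "(1 - fps_X - fps_X ^ 2 :: 'a fps) = 0"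
  then have "fps_nth (1 - fps_X - fps_X ^ 2 :: 'a fps) 0 = 0" by simp
  then show False by simp
qed

lemma eq_divide_fib_denominator_sq:
  fixes L :: "'a::field fps"
  assumes "L * (1 - fps_X - fps_X ^ 2) ^ 2 = fps_X ^ 2 - fps_X ^ 3"
  shows "L = (fps_X ^ 2 - fps_X ^ 3) / (1 - fps_X - fps_X ^ 2) ^ 2"
proof -
  have "(1 - fps_X - fps_X ^ 2 :: 'a fps) ^ 2 \<noteq> 0" using fib_denominator_ne_0 by simp
  then have "L * (1 - fps_X - fps_X ^ 2) ^ 2 / (1 - fps_X - fps_X ^ 2) ^ 2 = L"
    by (rule fps_divide_times_eq)
  then show ?thesis unfolding assms by (rule sym)
qed

lemma backward_difference_over_fib_denominator:
  fixes A B :: "'a::field fps"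
  assumes "A * (1 - fps_X - fps_X ^ 2) = fps_X * B" "B * (1 - fps_X - fps_X ^ 2) = fps_X"
  shows "(1 - fps_X) * A = (fps_X ^ 2 - fps_X ^ 3) / (1 - fps_X - fps_X ^ 2) ^ 2"
proof (rule eq_divide_fib_denominator_sq)
  let ?D = "1 - fps_X - fps_X ^ 2 :: 'a fps"
  have "(1 - fps_X) * A * ?D ^ 2 = (1 - fps_X) * (A * ?D) * ?D"
    by (simp only: power2_eq_square ac_simps)
  also have "\<dots> = (1 - fps_X) * fps_X * (B * ?D)"
    by (simp only: assms(1) ac_simps)
  also have "\<dots> = fps_X ^ 2 - fps_X ^ 3"
    by (simp only: assms(2)) (simp add: algebra_simps power2_eq_square power3_eq_cube)
  finally show "(1 - fps_X) * A * ?D ^ 2 = fps_X ^ 2 - fps_X ^ 3" .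
qed

lemma difference_over_fib_denominator:
  fixes A B G H :: "'a::field fps"
  assumes "A * (1 - fps_X - fps_X ^ 2) = fps_X + fps_X * G" "B * (1 - fps_X - fps_X ^ 2) = fps_X + fps_X ^ 2 * H"
    "G * (1 - fps_X - fps_X ^ 2) = fps_X" "H * (1 - fps_X - fps_X ^ 2) = fps_X"
  shows "A - B = (fps_X ^ 2 - fps_X ^ 3) / (1 - fps_X - fps_X ^ 2) ^ 2"
proof (rule eq_divide_fib_denominator_sq)
  let ?D = "1 - fps_X - fps_X ^ 2 :: 'a fps"
  have "(A - B) * ?D ^ 2 = (A * ?D) * ?D - (B * ?D) * ?D"
    by (simp only: power2_eq_square left_diff_distrib ac_simps)
  also have "\<dots> = (fps_X + fps_X * G) * ?D - (fps_X + fps_X ^ 2 * H) * ?D"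
    by (simp only: assms(1,2))
  also have "\<dots> = fps_X * (G * ?D) - fps_X ^ 2 * (H * ?D)"
    by (simp add: algebra_simps)
  also have "\<dots> = fps_X ^ 2 - fps_X ^ 3"
    by (simp only: assms(3,4)) (simp add: power2_eq_square power3_eq_cube)
  finally show "(A - B) * ?D ^ 2 = fps_X ^ 2 - fps_X ^ 3" .
qed

theorem mainTheorem4:
  shows "Abs_fps (\<lambda>M. if M = 0 then 0 else of_int (int (g1 M) - int (g1 (M - 1))) :: rat)
           = (fps_X ^ 2 - fps_X ^ 3) / (1 - fps_X - fps_X ^ 2) ^ 2
       \<and> Abs_fps (\<lambda>M. if M = 0 then 0 else of_int (int (h1 M) - int (h1 (M - 1))) :: rat)
           = (fps_X ^ 2 - fps_X ^ 3) / (1 - fps_X - fps_X ^ 2) ^ 2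
       \<and> Abs_fps (\<lambda>M. if M = 0 then 0 else of_int (int (g M) - int (h M)) :: rat)
           = (fps_X ^ 2 - fps_X ^ 3) / (1 - fps_X - fps_X ^ 2) ^ 2"
proof (intro conjI)
  have "g1 0 = 0" "h1 0 = 0" "g 0 = h 0" by (simp_all add: g1_def h1_def g_def h_def partition_classes_0)
  then show
    "Abs_fps (\<lambda>M. if M = 0 then 0 else of_int (int (g1 M) - int (g1 (M - 1))) :: rat)
       = (fps_X ^ 2 - fps_X ^ 3) / (1 - fps_X - fps_X ^ 2) ^ 2"
    "Abs_fps (\<lambda>M. if M = 0 then 0 else of_int (int (h1 M) - int (h1 (M - 1))) :: rat)
       = (fps_X ^ 2 - fps_X ^ 3) / (1 - fps_X - fps_X ^ 2) ^ 2"
    "Abs_fps (\<lambda>M. if M = 0 then 0 else of_int (int (g M) - int (h M)) :: rat)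
       = (fps_X ^ 2 - fps_X ^ 3) / (1 - fps_X - fps_X ^ 2) ^ 2"
    by (simp_all only: Abs_fps_backward_difference Abs_fps_difference
        backward_difference_over_fib_denominator[OF ogf_g1 ogf_card_calG]
        backward_difference_over_fib_denominator[OF ogf_h1 ogf_card_calH]
        difference_over_fib_denominator[OF ogf_g ogf_h ogf_card_calG ogf_card_calH])
qed

end
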